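(* Let $q=r^2$ where $r$ is a prime power and let $s$ be a positive integer. Let $C_1,\dots,C_s$ be linear codes of the same length $m$ over $\mathbb{F}_q$. If $A\in M_{s,s}(\mathbb{F}_q)$ satisfies $AA^\dagger=\lambda J_s$ for some nonzero $\lambda\in\mathbb{F}_q$ and $C_i=C_{s-i+1}^{\perp_H}$ for all $1\le i\le s$, then the matrix-product code $C_A=[C_1,\dots,C_s]\cdot A$ is Hermitian self-dual, i.e., $C_A=C_A^{\perp_H}$.
   Context: For $a\in\mathbb{F}_q$, $\overline{a}:=a^r$. For a matrix $A=[a_{ij}]$ over $\mathbb{F}_q$, $A^\dagger:=[\overline{a_{ji}}]$. $J_s$ is the $s\times s$ anti-diagonal matrix with all anti-diagonal entries equal to $1$ and all other entries $0$. The Hermitian inner product on $\mathbb{F}_q^n$ is $\langle u,v\rangle_H=\sum_i u_i\overline{v_i}$, and $C^{\perp_H}$ is the dual of $C$ with respect to it. If $C_i$ has generator matrix $G_i$ and $A=[a_{ij}]\in M_{s,l}(\mathbb{F}_q)$, the matrix-product code $[C_1,\dots,C_s]\cdot A$ is the linear code of length $ml$ generated by the block matrix whose $(i,j)$ block is $a_{ij}G_i$. *)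

theory Defs
  imports Main "HOL-Computational_Algebra.Primes"
begin

text \<open>Vectors of length n over a field: functions nat => 'a vanishing at indices >= n
  (coordinates 0..n-1).\<close>
definition vecs :: "nat \<Rightarrow> (nat \<Rightarrow> 'a::zero) set" where
  "vecs n = {x. \<forall>i\<ge>n. x i = 0}"

definition linear_code :: "nat \<Rightarrow> (nat \<Rightarrow> 'a::field) set \<Rightarrow> bool" where
  "linear_code n C \<longleftrightarrow> C \<subseteq> vecs n \<and> (\<lambda>_. 0) \<in> C \<and>
     (\<forall>x\<in>C. \<forall>y\<in>C. (\<lambda>i. x i + y i) \<in> C) \<and>
     (\<forall>c. \<forall>x\<in>C. (\<lambda>i. c * x i) \<in> C)"

definition hconj :: "nat \<Rightarrow> 'a::field \<Rightarrow> 'a" where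
  "hconj r a = a ^ r"

definition herm_ip :: "nat \<Rightarrow> nat \<Rightarrow> (nat \<Rightarrow> 'a::field) \<Rightarrow> (nat \<Rightarrow> 'a) \<Rightarrow> 'a" where
  "herm_ip r n u v = (\<Sum>i<n. u i * hconj r (v i))"

definition herm_dual :: "nat \<Rightarrow> nat \<Rightarrow> (nat \<Rightarrow> 'a::field) set \<Rightarrow> (nat \<Rightarrow> 'a) set" where
  "herm_dual r n C = {v \<in> vecs n. \<forall>u\<in>C. herm_ip r n u v = 0}"

definition antidiag :: "nat \<Rightarrow> nat \<Rightarrow> nat \<Rightarrow> 'a::field" where
  "antidiag s i j = (if i < s \<and> j < s \<and> i + j = s - 1 then 1 else 0)"

definition mult_dagger :: "nat \<Rightarrow> nat \<Rightarrow> (nat \<Rightarrow> nat \<Rightarrow> 'a::field) \<Rightarrow> nat \<Rightarrow> nat \<Rightarrow> 'a" where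
  "mult_dagger r l A i j = (\<Sum>k<l. A i k * hconj r (A j k))"

text \<open>It is the row space of the block matrix with blocks a_ij G_i, i.e. the set of
  concatenations (sum_i a_i0 c_i | ... | sum_i a_i(l-1) c_i) with c_i in C_i;
  block j occupies coordinates j*m .. j*m+m-1.\<close>
definition matrix_product_code ::
  "nat \<Rightarrow> nat \<Rightarrow> nat \<Rightarrow> (nat \<Rightarrow> (nat \<Rightarrow> 'a::field) set) \<Rightarrow> (nat \<Rightarrow> nat \<Rightarrow> 'a) \<Rightarrow> (nat \<Rightarrow> 'a) set" where
  "matrix_product_code m s l C A =
     {x. \<exists>c. (\<forall>i<s. c i \<in> C i) \<and>
          x = (\<lambda>p. if p < m * l then (\<Sum>i<s. A i (p div m) * c i (p mod m)) else 0)}"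

end

theory Submission
  imports Defs "Jordan_Normal_Form.Determinant" "HOL-Number_Theory.Residues"
begin

text \<open>
  The Hermitian inner product of two words of \<open>[C\<^sub>1,\<dots>,C\<^sub>s] \<cdot> A\<close> built from
  \<open>(c\<^sub>i)\<close> and \<open>(d\<^sub>k)\<close> is \<open>\<Sum>\<^sub>i\<^sub>,\<^sub>k (A A\<^sup>\<dagger>)\<^sub>i\<^sub>k \<langle>c\<^sub>i, d\<^sub>k\<rangle>\<close>. For \<open>A A\<^sup>\<dagger> = \<lambda> J\<^sub>s\<close> only the
  terms \<open>\<langle>c\<^sub>i, d\<^sub>s\<^sub>+\<^sub>1\<^sub>-\<^sub>i\<rangle>\<close> survive, and they vanish because \<open>C\<^sub>s\<^sub>+\<^sub>1\<^sub>-\<^sub>i \<subseteq> C\<^sub>i\<^sup>\<perp>\<close>; so the code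
  is self-orthogonal. Conversely \<open>A\<close> is invertible with inverse \<open>\<lambda>\<^sup>-\<^sup>1 A\<^sup>\<dagger> J\<^sub>s\<close>, so every
  vector \<open>y\<close> of length \<open>ms\<close> is the word of some tuple \<open>(d\<^sub>i)\<close>; if \<open>y\<close> is orthogonal
  to the code, testing it against the words built from a single nonzero component
  shows \<open>d\<^sub>i \<in> C\<^sub>s\<^sub>+\<^sub>1\<^sub>-\<^sub>i\<^sup>\<perp> = C\<^sub>i\<close>.
\<close>

definition mp_word ::
  "nat \<Rightarrow> nat \<Rightarrow> nat \<Rightarrow> (nat \<Rightarrow> nat \<Rightarrow> 'a::field) \<Rightarrow> (nat \<Rightarrow> nat \<Rightarrow> 'a) \<Rightarrow> nat \<Rightarrow> 'a" where
  "mp_word m s l A c = (\<lambda>p. if p < m * l then (\<Sum>i<s. A i (p div m) * c i (p mod m)) else 0)"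

lemma mem_matrix_product_code:
  "x \<in> matrix_product_code m s l C A \<longleftrightarrow> (\<exists>c. (\<forall>i<s. c i \<in> C i) \<and> x = mp_word m s l A c)"
  by (simp add: matrix_product_code_def mp_word_def)

lemma mp_word_in_vecs: "mp_word m s l A c \<in> vecs (m * l)"
  by (simp add: mp_word_def vecs_def)

lemma mp_word_block:
  assumes "j < l" "t < m"
  shows "mp_word m s l A c (j * m + t) = (\<Sum>i<s. A i j * c i t)"
proof -
  have "j * m + t < Suc j * m" using assms(2) by simp
  also have "\<dots> \<le> l * m" using assms(1) by (intro mult_le_mono1) simp
  finally show ?thesis using assms by (simp add: mp_word_def mult.commute)
qed

lemma sum_lessThan_mult_blocks:
  fixes m l :: nat
  shows "(\<Sum>p<m * l. f p) = (\<Sum>j<l. \<Sum>t<m. f (j * m + t))"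
proof -
  have "(\<Sum>p\<in>{j * m..<j * m + m}. f p) = (\<Sum>t<m. f (j * m + t))" for j
    using sum.shift_bounds_nat_ivl[of f 0 "j * m" m]
    by (simp add: add.commute lessThan_atLeast0)
  then show ?thesis
    using sum.nat_group[of f m l] by (simp add: mult.commute)
qed

lemma herm_ip_mp_word:
  "herm_ip r (m * l) (mp_word m s l A c) y =
     (\<Sum>i<s. \<Sum>j<l. A i j * herm_ip r m (c i) (\<lambda>t. y (j * m + t)))"
proof -
  have "herm_ip r (m * l) (mp_word m s l A c) y =
      (\<Sum>j<l. \<Sum>t<m. \<Sum>i<s. A i j * (c i t * hconj r (y (j * m + t))))"
    unfolding herm_ip_def sum_lessThan_mult_blocks
    by (intro sum.cong refl) (simp add: mp_word_block sum_distrib_right mult.assoc)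
  also have "\<dots> = (\<Sum>j<l. \<Sum>i<s. \<Sum>t<m. A i j * (c i t * hconj r (y (j * m + t))))"
    by (intro sum.cong refl sum.swap)
  also have "\<dots> = (\<Sum>i<s. \<Sum>j<l. \<Sum>t<m. A i j * (c i t * hconj r (y (j * m + t))))"
    by (rule sum.swap)
  finally show ?thesis
    by (simp add: herm_ip_def sum_distrib_left)
qed

lemma hconj_mult: "hconj r (x * y) = hconj r x * hconj r y"
  by (simp add: hconj_def power_mult_distrib)

lemma hconj_divide: "hconj r (x / y) = hconj r x / hconj r y"
  by (simp add: hconj_def power_divide)

lemma hconj_zero:
  assumes "\<And>x y :: 'a::field. hconj r (x + y) = hconj r x + hconj r y"
  shows "hconj r (0 :: 'a) = 0"
  using assms[of 0 0] by (metis add.right_neutral add_left_cancel)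

lemma hconj_sum:
  assumes "\<And>x y :: 'a::field. hconj r (x + y) = hconj r x + hconj r y"
  shows "hconj r (\<Sum>i\<in>I. f i) = (\<Sum>i\<in>I. hconj r (f i :: 'a))"
  by (induction I rule: infinite_finite_induct) (simp_all add: assms hconj_zero[OF assms])

lemma herm_ip_sum_right:
  fixes u :: "nat \<Rightarrow> 'a::field"
  assumes "\<And>x y :: 'a. hconj r (x + y) = hconj r x + hconj r y"
  shows "herm_ip r n u (\<lambda>t. \<Sum>k\<in>K. a k * v k t) = (\<Sum>k\<in>K. hconj r (a k) * herm_ip r n u (v k))"
proof -
  have "herm_ip r n u (\<lambda>t. \<Sum>k\<in>K. a k * v k t) = (\<Sum>t<n. \<Sum>k\<in>K. hconj r (a k) * (u t * hconj r (v k t)))"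
    unfolding herm_ip_def
    by (intro sum.cong refl) (simp add: hconj_sum[OF assms] hconj_mult sum_distrib_left mult_ac)
  also have "\<dots> = (\<Sum>k\<in>K. \<Sum>t<n. hconj r (a k) * (u t * hconj r (v k t)))"
    by (rule sum.swap)
  finally show ?thesis
    by (simp add: herm_ip_def sum_distrib_left)
qed

lemma herm_ip_cong_right:
  "(\<And>t. t < n \<Longrightarrow> v t = w t) \<Longrightarrow> herm_ip r n u v = herm_ip r n u w"
  unfolding herm_ip_def by simp

lemma herm_ip_mp_word_mp_word:
  assumes "\<And>x y :: 'a::field. hconj r (x + y) = hconj r x + hconj r y"
  shows "herm_ip r (m * l) (mp_word m s l A c) (mp_word m s l A d) =
           (\<Sum>i<s. \<Sum>k<s. mult_dagger r l A i k * herm_ip r m (c i) (d k :: nat \<Rightarrow> 'a))"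
proof -
  have block: "herm_ip r m (c i) (\<lambda>t. mp_word m s l A d (j * m + t)) =
      (\<Sum>k<s. hconj r (A k j) * herm_ip r m (c i) (d k))" if "j < l" for i j
  proof -
    have "herm_ip r m (c i) (\<lambda>t. mp_word m s l A d (j * m + t)) =
        herm_ip r m (c i) (\<lambda>t. \<Sum>k<s. A k j * d k t)"
      using that by (intro herm_ip_cong_right) (simp add: mp_word_block)
    then show ?thesis by (simp add: herm_ip_sum_right[OF assms])
  qed
  have "herm_ip r (m * l) (mp_word m s l A c) (mp_word m s l A d) =
      (\<Sum>i<s. \<Sum>j<l. \<Sum>k<s. A i j * hconj r (A k j) * herm_ip r m (c i) (d k))"
    unfolding herm_ip_mp_word
    by (intro sum.cong refl) (simp add: block sum_distrib_left mult.assoc)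
  also have "\<dots> = (\<Sum>i<s. \<Sum>k<s. \<Sum>j<l. A i j * hconj r (A k j) * herm_ip r m (c i) (d k))"
    by (intro sum.cong refl sum.swap)
  finally show ?thesis
    by (simp add: mult_dagger_def sum_distrib_right)
qed

lemma matrix_product_code_subset_herm_dual:
  assumes "\<And>x y :: 'a::field. hconj r (x + y) = hconj r x + hconj r y"
    and AA: "\<forall>i<s. \<forall>k<s. mult_dagger r l A i k = lam * antidiag s i k"
    and orth: "\<forall>i<s. C (s - 1 - i) \<subseteq> herm_dual r m (C i :: (nat \<Rightarrow> 'a) set)"
  shows "matrix_product_code m s l C A \<subseteq> herm_dual r (m * l) (matrix_product_code m s l C A)"
proof
  fix x assume "x \<in> matrix_product_code m s l C A"
  then obtain d where d: "\<forall>i<s. d i \<in> C i" and x: "x = mp_word m s l A d"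
    by (auto simp: mem_matrix_product_code)
  have "herm_ip r (m * l) u x = 0" if "u \<in> matrix_product_code m s l C A" for u
  proof -
    obtain c where c: "\<forall>i<s. c i \<in> C i" and u: "u = mp_word m s l A c"
      using \<open>u \<in> _\<close> by (auto simp: mem_matrix_product_code)
    have "herm_ip r (m * l) u x = (\<Sum>i<s. \<Sum>k<s. lam * antidiag s i k * herm_ip r m (c i) (d k))"
      unfolding u x herm_ip_mp_word_mp_word[OF assms(1)] using AA by simp
    also have "\<dots> = (\<Sum>i<s. \<Sum>k<s. if k = s - 1 - i then lam * herm_ip r m (c i) (d k) else 0)"
      by (intro sum.cong refl) (auto simp: antidiag_def)
    also have "\<dots> = (\<Sum>i<s. lam * herm_ip r m (c i) (d (s - 1 - i)))"
      by (intro sum.cong refl) (simp add: sum.delta)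
    also have "\<dots> = 0"
    proof (intro sum.neutral ballI)
      fix i assume "i \<in> {..<s}"
      then have "d (s - 1 - i) \<in> C (s - 1 - i)" "c i \<in> C i"
        using c d by auto
      moreover have "C (s - 1 - i) \<subseteq> herm_dual r m (C i)"
        using orth \<open>i \<in> {..<s}\<close> by blast
      ultimately show "lam * herm_ip r m (c i) (d (s - 1 - i)) = 0"
        by (auto simp: herm_dual_def)
    qed
    finally show ?thesis .
  qed
  then show "x \<in> herm_dual r (m * l) (matrix_product_code m s l C A)"
    by (simp add: herm_dual_def x mp_word_in_vecs)
qed

lemma left_inverse_if_right_inverse:
  fixes A B :: "nat \<Rightarrow> nat \<Rightarrow> 'a::field"
  assumes "\<forall>i<n. \<forall>j<n. (\<Sum>k<n. A i k * B k j) = (if i = j then 1 else 0)"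
  shows "\<forall>i<n. \<forall>j<n. (\<Sum>k<n. B i k * A k j) = (if i = j then 1 else 0)"
proof -
  define M where "M = mat n n (\<lambda>(i, j). A i j)"
  define N where "N = mat n n (\<lambda>(i, j). B i j)"
  have "M * N = 1\<^sub>m n"
    using assms by (intro eq_matI) (auto simp: M_def N_def scalar_prod_def atLeast0LessThan)
  then have NM: "N * M = 1\<^sub>m n"
    by (rule mat_mult_left_right_inverse[rotated 2]) (simp_all add: M_def N_def)
  show ?thesis
  proof (intro allI impI)
    fix i j assume "i < n" "j < n"
    then have "(N * M) $$ (i, j) = (1\<^sub>m n :: 'a mat) $$ (i, j)"
      by (simp only: NM)
    then show "(\<Sum>k<n. B i k * A k j) = (if i = j then 1 else 0)"
      using \<open>i < n\<close> \<open>j < n\<close> by (simp add: M_def N_def scalar_prod_def atLeast0LessThan)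
  qed
qed

text \<open>The right inverse is \<open>\<lambda>\<^sup>-\<^sup>1 A\<^sup>\<dagger> J\<^sub>s\<close>, whose entry \<open>(k, j)\<close> is \<open>\<lambda>\<^sup>-\<^sup>1 (A\<^sub>s\<^sub>-\<^sub>1\<^sub>-\<^sub>j\<^sub>,\<^sub>k)\<^sup>r\<close>.\<close>

lemma right_inverse_if_mult_dagger_antidiag:
  assumes AA: "\<forall>i<s. \<forall>j<s. mult_dagger r s A i j = lam * antidiag s i j" and "lam \<noteq> 0"
  shows "\<forall>i<s. \<forall>j<s. (\<Sum>k<s. A i k * (hconj r (A (s - 1 - j) k) / lam)) = (if i = j then 1 else 0)"
proof (intro allI impI)
  fix i j assume "i < s" "j < s"
  then have "(\<Sum>k<s. A i k * (hconj r (A (s - 1 - j) k) / lam)) = antidiag s i (s - 1 - j)"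
    using AA \<open>lam \<noteq> 0\<close> by (simp add: mult_dagger_def sum_divide_distrib[symmetric])
  also have "\<dots> = (if i = j then 1 else 0)"
    using \<open>i < s\<close> \<open>j < s\<close> by (auto simp: antidiag_def)
  finally show "(\<Sum>k<s. A i k * (hconj r (A (s - 1 - j) k) / lam)) = (if i = j then 1 else 0)" .
qed

lemma eq_mp_word_if_left_inverse:
  assumes BA: "\<forall>i<s. \<forall>j<s. (\<Sum>k<s. B i k * A k j) = (if i = j then 1 else 0)"
    and y: "y \<in> vecs (m * s)"
  shows "y = mp_word m s s A (\<lambda>i t. if t < m then \<Sum>j<s. B j i * y (j * m + t) else 0)"
    (is "y = mp_word m s s A ?d")
proof
  fix p
  show "y p = mp_word m s s A ?d p"
  proof (cases "p < m * s")
    case False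
    then show ?thesis using y by (simp add: vecs_def mp_word_def)
  next
    case True
    then have "m > 0" by (cases m) auto
    define j t where "j = p div m" and "t = p mod m"
    have jt: "j < s" "t < m" "p = j * m + t"
      using True \<open>m > 0\<close> by (auto simp: j_def t_def less_mult_imp_div_less mult.commute)
    have "mp_word m s s A ?d p = (\<Sum>i<s. \<Sum>j'<s. B j' i * A i j * y (j' * m + t))"
      using jt by (simp add: mp_word_block sum_distrib_left mult_ac)
    also have "\<dots> = (\<Sum>j'<s. (\<Sum>i<s. B j' i * A i j) * y (j' * m + t))"
      by (subst sum.swap) (simp add: sum_distrib_right)
    also have "\<dots> = (\<Sum>j'<s. if j' = j then y (j' * m + t) else 0)"
      using BA jt by (intro sum.cong refl) auto
    also have "\<dots> = y p"
      using jt by simp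
    finally show ?thesis ..
  qed
qed

lemma herm_dual_subset_matrix_product_code:
  assumes conj_add: "\<And>x y :: 'a::field. hconj r (x + y) = hconj r x + hconj r y"
    and conj_conj: "\<And>x :: 'a. hconj r (hconj r x) = x"
    and AA: "\<forall>i<s. \<forall>j<s. mult_dagger r s A i j = lam * antidiag s i j" and "lam \<noteq> 0"
    and zero: "\<forall>i<s. (\<lambda>_. 0) \<in> C i"
    and dual: "\<forall>i<s. herm_dual r m (C (s - 1 - i)) \<subseteq> (C i :: (nat \<Rightarrow> 'a) set)"
  shows "herm_dual r (m * s) (matrix_product_code m s s C A) \<subseteq> matrix_product_code m s s C A"
proof
  fix y assume y: "y \<in> herm_dual r (m * s) (matrix_product_code m s s C A)"
  define R where "R k j = hconj r (A (s - 1 - j) k) / lam" for k j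
  define d where "d i t = (if t < m then \<Sum>j<s. R j i * y (j * m + t) else 0)" for i t
  have AR: "\<forall>i<s. \<forall>j<s. (\<Sum>k<s. A i k * R k j) = (if i = j then 1 else 0)"
    using right_inverse_if_mult_dagger_antidiag[OF AA \<open>lam \<noteq> 0\<close>] by (simp add: R_def)
  have "y \<in> vecs (m * s)"
    using y by (simp add: herm_dual_def)
  then have "y = mp_word m s s A d"
    unfolding d_def by (rule eq_mp_word_if_left_inverse[OF left_inverse_if_right_inverse[OF AR]])
  moreover have "d i \<in> C i" if "i < s" for i
  proof -
    have "herm_ip r m u (d i) = 0" if u: "u \<in> C (s - 1 - i)" for u
    proof -
      define c where "c i' = (if i' = s - 1 - i then u else (\<lambda>_. 0))" for i'
      have "mp_word m s s A c \<in> matrix_product_code m s s C A"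
        using zero u unfolding mem_matrix_product_code by (intro exI[of _ c]) (simp add: c_def)
      then have "herm_ip r (m * s) (mp_word m s s A c) y = 0"
        using y by (simp add: herm_dual_def)
      moreover have "herm_ip r (m * s) (mp_word m s s A c) y =
          (\<Sum>i'<s. if i' = s - 1 - i then \<Sum>j<s. A i' j * herm_ip r m u (\<lambda>t. y (j * m + t)) else 0)"
        unfolding herm_ip_mp_word by (intro sum.cong refl) (simp add: c_def herm_ip_def)
      ultimately have orth: "(\<Sum>j<s. A (s - 1 - i) j * herm_ip r m u (\<lambda>t. y (j * m + t))) = 0"
        using \<open>i < s\<close> by (simp add: sum.delta)
      have "herm_ip r m u (d i) = herm_ip r m u (\<lambda>t. \<Sum>j<s. R j i * y (j * m + t))"
        by (rule herm_ip_cong_right) (simp add: d_def)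
      also have "\<dots> = (\<Sum>j<s. hconj r (R j i) * herm_ip r m u (\<lambda>t. y (j * m + t)))"
        by (rule herm_ip_sum_right[OF conj_add])
      also have "\<dots> = (\<Sum>j<s. A (s - 1 - i) j * herm_ip r m u (\<lambda>t. y (j * m + t))) / hconj r lam"
        by (simp add: R_def hconj_divide conj_conj sum_divide_distrib)
      finally show ?thesis
        using orth by simp
    qed
    then have "d i \<in> herm_dual r m (C (s - 1 - i))"
      by (simp add: herm_dual_def vecs_def d_def)
    then show ?thesis using dual \<open>i < s\<close> by blast
  qed
  ultimately show "y \<in> matrix_product_code m s s C A"
    by (auto simp: mem_matrix_product_code)
qed

text \<open>The library version \<open>finite_field_power_card_eq_same\<close> requires the sort
  \<open>finite_field\<close>, which a type variable of sort \<open>{field, finite}\<close> does not have.\<close>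

lemma finite_field_power_card:
  fixes x :: "'a::{field,finite}"
  shows "x ^ card (UNIV :: 'a set) = x"
proof (cases "x = 0")
  case True
  then show ?thesis by (simp add: finite_UNIV_card_ge_0)
next
  case False
  let ?U = "UNIV - {0 :: 'a}"
  have "inj_on ((*) x) ?U" using False by (auto intro: inj_onI)
  moreover have "(*) x ` ?U = ?U"
  proof
    show "?U \<subseteq> (*) x ` ?U"
    proof
      fix y assume "y \<in> ?U"
      then have "y / x \<in> ?U" "y = x * (y / x)" using False by auto
      then show "y \<in> (*) x ` ?U" by blast
    qed
  qed (use False in auto)
  ultimately have "(\<Prod>y\<in>?U. x * y) = \<Prod>?U"
    using prod.reindex[of "(*) x" ?U id] by simp
  then have "x ^ card ?U * \<Prod>?U = 1 * \<Prod>?U"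
    by (simp add: prod.distrib)
  moreover have "\<Prod>?U \<noteq> 0" by simp
  ultimately have "x ^ card ?U = 1" by (metis mult_right_cancel)
  moreover have "card (UNIV :: 'a set) = Suc (card ?U)"
    by (simp add: card_Diff_singleton finite_UNIV_card_ge_0 Suc_diff_1)
  ultimately show ?thesis
    by (simp only: power_Suc mult_1_right)
qed

lemma CHAR_eq_if_card_eq_prime_power:
  assumes "prime p" "card (UNIV :: 'a::{field,finite} set) = p ^ n"
  shows "CHAR('a) = p"
proof -
  have "CHAR('a) > 0"
    by (rule finite_imp_CHAR_pos) simp
  then have "prime CHAR('a)"
    by (rule prime_CHAR_semidom)
  moreover have "CHAR('a) dvd p ^ n"
    using CHAR_dvd_CARD[where 'a = 'a] assms(2) by simp
  ultimately show ?thesis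
    using assms(1) prime_dvd_power primes_dvd_imp_eq by blast
qed

theorem corollary3p3:
  fixes C :: "nat \<Rightarrow> (nat \<Rightarrow> 'a::{field,finite}) set"
    and A :: "nat \<Rightarrow> nat \<Rightarrow> 'a"
    and r s m :: nat and lam :: 'a and p k :: nat
  assumes "prime p" and "k > 0" and "r = p ^ k"
    and "card (UNIV :: 'a set) = r ^ 2"
    and "s > 0"
    and "\<forall>i<s. linear_code m (C i)"
    and "lam \<noteq> 0"
    and "\<forall>i<s. \<forall>j<s. mult_dagger r s A i j = lam * antidiag s i j"
    and "\<forall>i<s. C i = herm_dual r m (C (s - 1 - i))"
  shows "matrix_product_code m s s C A = herm_dual r (m * s) (matrix_product_code m s s C A)"
proof -
  have char: "CHAR('a) = p"
    using assms(1,3,4) by (intro CHAR_eq_if_card_eq_prime_power[where n = "k * 2"]) (simp_all add: power_mult)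
  have conj_add: "hconj r (x + y) = hconj r x + hconj r y" for x y :: 'a
    using assms(1,3) char by (simp add: hconj_def freshmans_dream')
  have conj_conj: "hconj r (hconj r x) = x" for x :: 'a
    using assms(4) finite_field_power_card[of x] by (simp add: hconj_def power2_eq_square power_mult)
  have "C (s - 1 - i) \<subseteq> herm_dual r m (C i)" if "i < s" for i
  proof -
    have "s - 1 - i < s" "s - 1 - (s - 1 - i) = i"
      using that by auto
    then show ?thesis
      using assms(9) by (metis order_refl)
  qed
  then have "matrix_product_code m s s C A \<subseteq> herm_dual r (m * s) (matrix_product_code m s s C A)"
    by (intro matrix_product_code_subset_herm_dual[OF conj_add assms(8)]) blast
  moreover have "\<forall>i<s. (\<lambda>_. 0) \<in> C i"
    using assms(6) by (simp add: linear_code_def)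
  moreover have "\<forall>i<s. herm_dual r m (C (s - 1 - i)) \<subseteq> C i"
    using assms(9) by blast
  ultimately show ?thesis
    using herm_dual_subset_matrix_product_code[OF conj_add conj_conj assms(8,7)] by blast
qed

end
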